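(* Under the hypotheses of the ratio-version correlator cluster expansion, $$\langle O_AO_B\rangle_c=\langle O_A\rangle\langle O_B\rangle\left[\exp\Bigg\{\sum_{\substack{\Gamma\subseteq\mathcal L_{AB}\text{ finite},\ G_\Gamma\text{ connected}\\ \mathrm{supp}(\Gamma)\cap A\ne\emptyset,\ \mathrm{supp}(\Gamma)\cap B\ne\emptyset}}\big(\mathfrak K^{AB}(\Gamma)+\mathfrak K(\Gamma)-\mathfrak K^{A}(\Gamma)-\mathfrak K^{B}(\Gamma)\big)\Bigg\}-1\right],$$ where $\mathfrak K^X(\Gamma):=\sum_{\mathbf W\text{ connected},\ \text{loop-set}(\mathbf W)=\Gamma}\phi(\mathbf W)Z^X_{\mathbf W}$ for $X\in\{\emptyset,A,B,AB\}$, $\mathfrak K=\mathfrak K^\emptyset$.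
   Context: Let $|\psi\rangle$ be a PEPS on a finite graph $G=(V,E)$; $A,B\subseteq V$ disjoint, $O_A,O_B$ operators on the physical sites of $A$, $B$. $\mathcal Z=\mathcal Z^\emptyset=\langle\psi|\psi\rangle>0$; $\mathcal Z^X$ for $X=A,B,AB$ is the network for $\langle\psi|O_X|\psi\rangle$ with $O_{AB}=O_AO_B$; $\langle O_X\rangle=\mathcal Z^X/\mathcal Z$, $\langle O_AO_B\rangle_c=\langle O_AO_B\rangle-\langle O_A\rangle\langle O_B\rangle$. A BP fixed point of $\mathcal Z$ (messages $\mu_{v\to w}$, $I_{vw}=\mu_{v\to w}\star\mu_{w\to v}\ne0$, vertex tensor contracted with all incoming messages but one proportional to the outgoing one) is used for all networks; $\mathcal P^\perp_{vw}=\mathbb 1-\mu_{v\to w}\otimes\mu_{w\to v}/I_{vw}$. $\tilde Z^X_F$: contraction of $\mathcal Z^X$ with $\mathcal P^\perp$ on edges of $F$, $\mu\otimes\mu/I$ elsewhere; $Z^X_{BP}=\tilde Z^X_\emptyset$. $\mathcal L_{AB}$: connected subgraphs with at least one edge in which every vertex outside $A\cup B$ has degree $\ge2$; weights $Z^X_l=\tilde Z^X_{E(l)}/Z^X_{BP}$; supports are vertex sets; compatible = vertex-disjoint. Clusters $\mathbf W=\{(l_i,\eta_i)\}$ over $\mathcal L_{AB}$, $Z^X_{\mathbf W}=\prod(Z^X_{l_i})^{\eta_i}$, loop-set$(\mathbf W)=\{l_i\}$; interaction graph: $\eta_i$ vertices per $l_i$, adjacent iff equal or incompatible; connected if connected;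 $G_\Gamma$ is the interaction graph of $\{(l,1)\}_{l\in\Gamma}$, $\mathrm{supp}(\Gamma)=\bigcup_{l\in\Gamma}\mathrm{supp}(l)$. Ursell function $\phi(\mathbf W)=\frac1{\prod\eta_i!}\sum_C(-1)^{|E(C)|}$ over connected spanning subgraphs of the interaction graph. The ratio-version correlator expansion hypotheses: $Z^X_{BP}\ne0$, $\langle O_A\rangle,\langle O_B\rangle\ne0$, and absolutely convergent cluster expansions $\log\mathcal Z^X=\log Z^X_{BP}+\sum_{\mathbf W\text{ conn.}}\phi(\mathbf W)Z^X_{\mathbf W}$ over $\mathcal L_{AB}$ for all $X\in\{\emptyset,A,B,AB\}$. *)

theory Defs
  imports "HOL-Analysis.Analysis" "HOL-Library.Multiset" "HOL-Library.FuncSet"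
begin

text \<open>A finite simple graph: vertex set V, edges are 2-element subsets of V.
  Bond (virtual) index set of edge e is D e, physical index set at v is P v.\<close>

definition peps_data :: "'v set \<Rightarrow> 'v set set \<Rightarrow> ('v set \<Rightarrow> 'd set) \<Rightarrow> ('v \<Rightarrow> 'p set) \<Rightarrow> bool" where
  "peps_data V E D P \<longleftrightarrow> finite V \<and>
     (\<forall>e\<in>E. \<exists>v w. e = {v, w} \<and> v \<noteq> w \<and> v \<in> V \<and> w \<in> V) \<and>
     (\<forall>e\<in>E. finite (D e)) \<and> (\<forall>v\<in>V. finite (P v))"

definition inc :: "'v set set \<Rightarrow> 'v \<Rightarrow> 'v set set" where
  "inc E v = {e \<in> E. v \<in> e}"

definition half_edges :: "'v set set \<Rightarrow> ('v set \<times> 'v) set" where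
  "half_edges E = {(e, v). e \<in> E \<and> v \<in> e}"

definition opairs :: "'v set \<Rightarrow> ('v \<times> 'v) set" where
  "opairs e = {(v, w). v \<in> e \<and> w \<in> e \<and> v \<noteq> w}"

definition graph_connected :: "'a set \<Rightarrow> 'a set set \<Rightarrow> bool" where
  "graph_connected N C \<longleftrightarrow> (\<forall>x\<in>N. \<forall>y\<in>N. (x, y) \<in> {(a, b). {a, b} \<in> C}\<^sup>*)"

section \<open>Operators (matrices on physical configurations of all of V)\<close>

definition op_id :: "'v set \<Rightarrow> ('v \<Rightarrow> 'p set) \<Rightarrow> ('v \<Rightarrow> 'p) \<Rightarrow> ('v \<Rightarrow> 'p) \<Rightarrow> complex" where
  "op_id V P s s' = (if s = s' then 1 else 0)"

text \<open>an operator O on the sites S (matrix on configurations of S) tensored with identity\<close>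
definition op_on :: "'v set \<Rightarrow> 'v set \<Rightarrow> (('v \<Rightarrow> 'p) \<Rightarrow> ('v \<Rightarrow> 'p) \<Rightarrow> complex)
    \<Rightarrow> ('v \<Rightarrow> 'p) \<Rightarrow> ('v \<Rightarrow> 'p) \<Rightarrow> complex" where
  "op_on V S Q s s' = Q (restrict s S) (restrict s' S) *
       (if restrict s (V - S) = restrict s' (V - S) then 1 else 0)"

definition op_mult :: "'v set \<Rightarrow> ('v \<Rightarrow> 'p set) \<Rightarrow> (('v \<Rightarrow> 'p) \<Rightarrow> ('v \<Rightarrow> 'p) \<Rightarrow> complex)
    \<Rightarrow> (('v \<Rightarrow> 'p) \<Rightarrow> ('v \<Rightarrow> 'p) \<Rightarrow> complex) \<Rightarrow> ('v \<Rightarrow> 'p) \<Rightarrow> ('v \<Rightarrow> 'p) \<Rightarrow> complex" where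
  "op_mult V P Q1 Q2 s s' = (\<Sum>t\<in>PiE V P. Q1 s t * Q2 t s')"

section \<open>Double-layer tensor network for <psi|Op|psi> with bond matrices M\<close>

text \<open>T v p alpha: PEPS tensor at v, physical index p, virtual indices alpha on the
  edges incident to v. Double-layer bond index = (bra index, ket index).
  M e gamma: the matrix inserted on edge e, gamma assigns a double-layer index to each
  endpoint of e. The identity bond matrix gives the exact network.\<close>

definition net :: "'v set \<Rightarrow> 'v set set \<Rightarrow> ('v set \<Rightarrow> 'd set) \<Rightarrow> ('v \<Rightarrow> 'p set)
    \<Rightarrow> ('v \<Rightarrow> 'p \<Rightarrow> ('v set \<Rightarrow> 'd) \<Rightarrow> complex)
    \<Rightarrow> (('v \<Rightarrow> 'p) \<Rightarrow> ('v \<Rightarrow> 'p) \<Rightarrow> complex)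
    \<Rightarrow> ('v set \<Rightarrow> ('v \<Rightarrow> 'd \<times> 'd) \<Rightarrow> complex) \<Rightarrow> complex" where
  "net V E D P T Op M =
     (\<Sum>s\<in>PiE V P. \<Sum>s'\<in>PiE V P. Op s s' *
        (\<Sum>\<beta>\<in>PiE (half_edges E) (\<lambda>h. D (fst h) \<times> D (fst h)).
            (\<Prod>e\<in>E. M e (\<lambda>v. \<beta> (e, v))) *
            (\<Prod>v\<in>V. cnj (T v (s v) (restrict (\<lambda>e. fst (\<beta> (e, v))) (inc E v))) *
                      T v (s' v) (restrict (\<lambda>e. snd (\<beta> (e, v))) (inc E v)))))"

definition id_bond :: "'v set \<Rightarrow> ('v \<Rightarrow> 'd \<times> 'd) \<Rightarrow> complex" where
  "id_bond e \<gamma> = (if \<forall>v\<in>e. \<forall>w\<in>e. \<gamma> v = \<gamma> w then 1 else 0)"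

text \<open>The exact network Z^X = <psi|O_X|psi>.\<close>
definition Zfull where
  "Zfull V E D P T Op = net V E D P T Op id_bond"

text \<open>mu v w : message from v to w (a vector on D {v,w} x D {v,w}).
  I_e = mu_{v->w} star mu_{w->v}.\<close>
definition Imsg :: "('v set \<Rightarrow> 'd set) \<Rightarrow> ('v \<Rightarrow> 'v \<Rightarrow> 'd \<times> 'd \<Rightarrow> complex) \<Rightarrow> 'v set \<Rightarrow> complex" where
  "Imsg D \<mu> e = (\<Sum>k\<in>D e \<times> D e. \<Prod>(v, w)\<in>opairs e. \<mu> v w k)"

text \<open>mu_{v->w} (x) mu_{w->v} / I_vw: leg at v is contracted with the incoming mu_{w->v}\<close>
definition bp_bond :: "('v set \<Rightarrow> 'd set) \<Rightarrow> ('v \<Rightarrow> 'v \<Rightarrow> 'd \<times> 'd \<Rightarrow> complex)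
    \<Rightarrow> 'v set \<Rightarrow> ('v \<Rightarrow> 'd \<times> 'd) \<Rightarrow> complex" where
  "bp_bond D \<mu> e \<gamma> = (\<Prod>(v, w)\<in>opairs e. \<mu> w v (\<gamma> v)) / Imsg D \<mu> e"

definition perp_bond where
  "perp_bond D \<mu> e \<gamma> = id_bond e \<gamma> - bp_bond D \<mu> e \<gamma>"

text \<open>vertex tensor of the norm network Z at v (double layer, physical index summed)\<close>
definition vertex_tensor :: "'v set set \<Rightarrow> ('v \<Rightarrow> 'p set) \<Rightarrow> ('v \<Rightarrow> 'p \<Rightarrow> ('v set \<Rightarrow> 'd) \<Rightarrow> complex)
    \<Rightarrow> 'v \<Rightarrow> ('v set \<Rightarrow> 'd \<times> 'd) \<Rightarrow> complex" where
  "vertex_tensor E P T v \<gamma> = (\<Sum>p\<in>P v. cnj (T v p (restrict (\<lambda>e. fst (\<gamma> e)) (inc E v))) *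
                                        T v p (restrict (\<lambda>e. snd (\<gamma> e)) (inc E v)))"

definition bp_fixed_point :: "'v set \<Rightarrow> 'v set set \<Rightarrow> ('v set \<Rightarrow> 'd set) \<Rightarrow> ('v \<Rightarrow> 'p set)
    \<Rightarrow> ('v \<Rightarrow> 'p \<Rightarrow> ('v set \<Rightarrow> 'd) \<Rightarrow> complex) \<Rightarrow> ('v \<Rightarrow> 'v \<Rightarrow> 'd \<times> 'd \<Rightarrow> complex) \<Rightarrow> bool" where
  "bp_fixed_point V E D P T \<mu> \<longleftrightarrow>
     (\<forall>e\<in>E. Imsg D \<mu> e \<noteq> 0) \<and>
     (\<forall>v\<in>V. \<forall>w. {v, w} \<in> E \<longrightarrow>
        (\<exists>c::complex. \<forall>k\<in>D {v, w} \<times> D {v, w}.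
           (\<Sum>\<gamma>\<in>{\<gamma> \<in> PiE (inc E v) (\<lambda>e. D e \<times> D e). \<gamma> {v, w} = k}.
               vertex_tensor E P T v \<gamma> *
               (\<Prod>u\<in>{u. {u, v} \<in> E} - {w}. \<mu> u v (\<gamma> {u, v})))
           = c * \<mu> v w k))"

definition Ztil where
  "Ztil V E D P T \<mu> Op F = net V E D P T Op (\<lambda>e. if e \<in> F then perp_bond D \<mu> e else bp_bond D \<mu> e)"

definition ZBP where
  "ZBP V E D P T \<mu> Op = Ztil V E D P T \<mu> Op {}"

text \<open>loop weight Z^X_l (a loop is identified with its edge set)\<close>
definition Zloop where
  "Zloop V E D P T \<mu> Op l = Ztil V E D P T \<mu> Op l / ZBP V E D P T \<mu> Op"

definition supp :: "'v set set \<Rightarrow> 'v set" where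
  "supp l = \<Union>l"

definition degree_in :: "'v set set \<Rightarrow> 'v \<Rightarrow> nat" where
  "degree_in F v = card {e \<in> F. v \<in> e}"

definition loops_AB :: "'v set set \<Rightarrow> 'v set \<Rightarrow> 'v set \<Rightarrow> 'v set set set" where
  "loops_AB E A B = {F. F \<subseteq> E \<and> F \<noteq> {} \<and> graph_connected (supp F) F \<and>
                        (\<forall>v \<in> supp F - (A \<union> B). degree_in F v \<ge> 2)}"

definition compatible :: "'v set set \<Rightarrow> 'v set set \<Rightarrow> bool" where
  "compatible l l' \<longleftrightarrow> supp l \<inter> supp l' = {}"

text \<open>clusters are nonempty multisets of loops (loop l_i with multiplicity eta_i).
  Interaction graph: eta_i copies (l,k), k < eta_i, of each loop l; adjacent iff
  distinct and (equal loops or incompatible).\<close>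
definition ig_nodes :: "'v set set multiset \<Rightarrow> ('v set set \<times> nat) set" where
  "ig_nodes W = {(l, k). l \<in># W \<and> k < count W l}"

definition ig_edges :: "'v set set multiset \<Rightarrow> ('v set set \<times> nat) set set" where
  "ig_edges W = {{x, y} | x y. x \<in> ig_nodes W \<and> y \<in> ig_nodes W \<and> x \<noteq> y \<and>
                   (fst x = fst y \<or> \<not> compatible (fst x) (fst y))}"

definition cluster_connected :: "'v set set multiset \<Rightarrow> bool" where
  "cluster_connected W \<longleftrightarrow> graph_connected (ig_nodes W) (ig_edges W)"

definition ursell :: "'v set set multiset \<Rightarrow> complex" where
  "ursell W = (1 / (\<Prod>l\<in>set_mset W. of_nat (fact (count W l)))) *
     (\<Sum>C\<in>{C. C \<subseteq> ig_edges W \<and> graph_connected (ig_nodes W) C}. (-1) ^ card C)"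

definition conn_clusters :: "'v set set set \<Rightarrow> 'v set set multiset set" where
  "conn_clusters L = {W. W \<noteq> {#} \<and> set_mset W \<subseteq> L \<and> cluster_connected W}"

definition Zcluster where
  "Zcluster V E D P T \<mu> Op W = (\<Prod>l\<in>#W. Zloop V E D P T \<mu> Op l)"

definition cluster_expansion_holds where
  "cluster_expansion_holds V E D P T \<mu> L Op \<longleftrightarrow>
     (\<lambda>W. norm (ursell W * Zcluster V E D P T \<mu> Op W)) summable_on conn_clusters L \<and>
     Zfull V E D P T Op = ZBP V E D P T \<mu> Op *
        exp (\<Sum>\<^sub>\<infinity>W\<in>conn_clusters L. ursell W * Zcluster V E D P T \<mu> Op W)"

definition Kfun where
  "Kfun V E D P T \<mu> L Op \<Gamma> =
     (\<Sum>\<^sub>\<infinity>W\<in>{W \<in> conn_clusters L. set_mset W = \<Gamma>}. ursell W * Zcluster V E D P T \<mu> Op W)"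

end

theory Submission
  imports Defs
begin

text \<open>
  The BP projector on an edge has rank one: it is the product of the messages arriving at its two
  endpoints, divided by I_e. So if an operator acts as Q \<otimes> R across the cut (V - S, S) and
  every edge meeting S carries the BP projector, the contracted network factorises into a part
  depending only on Q and a part depending only on R. Consequently a loop avoiding B does not see
  O_B (Z^AB_l = Z^A_l and Z^B_l = Z_l), symmetrically for A, and Z^AB_BP Z_BP = Z^A_BP Z^B_BP.
  In the combination Z^AB_W + Z_W - Z^A_W - Z^B_W every cluster whose support misses A or B
  therefore cancels; grouping the remaining connected clusters by their loop sets gives the finite
  sum in the exponent, and dividing the four cluster expansions gives the formula.
\<close>

lemma bij_betw_merge:
  assumes "I \<inter> J = {}"
  shows "bij_betw (merge I J) (PiE I A \<times> PiE J A) (PiE (I \<union> J) A)"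
proof (rule bij_betw_byWitness[where f' = "\<lambda>f. (restrict f I, restrict f J)"])
  show "\<forall>p\<in>PiE I A \<times> PiE J A. (restrict (merge I J p) I, restrict (merge I J p) J) = p"
    using assms by (auto simp: restrict_PiE_iff)
  show "\<forall>f\<in>PiE (I \<union> J) A. merge I J (restrict f I, restrict f J) = f"
    by (auto simp: merge_def fun_eq_iff PiE_def extensional_def)
  show "merge I J ` (PiE I A \<times> PiE J A) \<subseteq> PiE (I \<union> J) A"
    using assms by (auto simp: PiE_iff)
  show "(\<lambda>f. (restrict f I, restrict f J)) ` PiE (I \<union> J) A \<subseteq> PiE I A \<times> PiE J A"
    by auto
qed

lemma sum_PiE_Un_mult:
  fixes g :: "_ \<Rightarrow> 'b::semiring_0"
  assumes "I \<inter> J = {}"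
    and "\<And>x y. x \<in> PiE I A \<Longrightarrow> y \<in> PiE J A \<Longrightarrow> g (merge I J (x, y)) = g1 x * g2 y"
  shows "(\<Sum>f\<in>PiE (I \<union> J) A. g f) = (\<Sum>x\<in>PiE I A. g1 x) * (\<Sum>y\<in>PiE J A. g2 y)"
proof -
  have "(\<Sum>f\<in>PiE (I \<union> J) A. g f) = (\<Sum>p\<in>PiE I A \<times> PiE J A. g (merge I J p))"
    by (rule sum.reindex_bij_betw[OF bij_betw_merge[OF assms(1)], symmetric])
  also have "\<dots> = (\<Sum>x\<in>PiE I A. \<Sum>y\<in>PiE J A. g1 x * g2 y)"
    by (auto simp: sum.cartesian_product assms(2) intro!: sum.cong)
  finally show ?thesis by (simp add: sum_product)
qed

lemma merge_in_PiE_Diff: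
  assumes "S \<subseteq> V" "x \<in> PiE (V - S) A" "y \<in> PiE S A"
  shows "merge (V - S) S (x, y) \<in> PiE V A"
proof -
  have "merge (V - S) S (x, y) \<in> PiE ((V - S) \<union> S) A"
    using assms(2,3) by (subst PiE_cancel_merge) auto
  moreover have "(V - S) \<union> S = V" using assms(1) by auto
  ultimately show ?thesis by metis
qed

lemma summable_on_diff:
  fixes f g :: "'a \<Rightarrow> 'b::topological_ab_group_add"
  assumes "f summable_on A" "g summable_on A"
  shows "(\<lambda>x. f x - g x) summable_on A"
  using summable_on_add[OF assms(1) summable_on_uminus[THEN iffD2, OF assms(2)]] by simp

lemma infsum_diff:
  fixes f g :: "'a \<Rightarrow> 'b::{topological_ab_group_add, t2_space}"
  assumes "f summable_on A" "g summable_on A"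
  shows "infsum (\<lambda>x. f x - g x) A = infsum f A - infsum g A"
  using infsum_add[OF assms(1) summable_on_uminus[THEN iffD2, OF assms(2)]]
  by (simp add: infsum_uminus)

lemma infsum_eq_sum_fibres:
  fixes f :: "'a \<Rightarrow> 'b::{topological_comm_monoid_add, t2_space}"
  assumes summable: "\<And>\<gamma>. \<gamma> \<in> G \<Longrightarrow> f summable_on {x \<in> X. k x = \<gamma>}"
    and "finite G" and "\<And>x. x \<in> X \<Longrightarrow> f x \<noteq> 0 \<Longrightarrow> k x \<in> G"
  shows "infsum f X = (\<Sum>\<gamma>\<in>G. infsum f {x \<in> X. k x = \<gamma>})"
proof -
  have "infsum f X = infsum f (\<Union>\<gamma>\<in>G. {x \<in> X. k x = \<gamma>})"
    by (rule infsum_cong_neutral) (use assms(3) in auto)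
  also have "\<dots> = (\<Sum>\<gamma>\<in>G. infsum f {x \<in> X. k x = \<gamma>})"
    by (rule sum_infsum[symmetric]) (use assms in auto)
  finally show ?thesis .
qed

section \<open>Operators acting as tensor products across a cut\<close>

lemma restrict_Un_eq_iff:
  "restrict f (I \<union> J) = restrict g (I \<union> J) \<longleftrightarrow> restrict f I = restrict g I \<and> restrict f J = restrict g J"
  by (auto simp: fun_eq_iff restrict_def)

definition op_splits :: "'v set \<Rightarrow> 'v set \<Rightarrow> ('v \<Rightarrow> 'p set)
    \<Rightarrow> (('v \<Rightarrow> 'p) \<Rightarrow> ('v \<Rightarrow> 'p) \<Rightarrow> complex) \<Rightarrow> (('v \<Rightarrow> 'p) \<Rightarrow> ('v \<Rightarrow> 'p) \<Rightarrow> complex)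
    \<Rightarrow> (('v \<Rightarrow> 'p) \<Rightarrow> ('v \<Rightarrow> 'p) \<Rightarrow> complex) \<Rightarrow> bool" where
  "op_splits V S P Q R Op \<longleftrightarrow> (\<forall>s\<in>PiE V P. \<forall>s'\<in>PiE V P.
     Op s s' = Q (restrict s (V - S)) (restrict s' (V - S)) * R (restrict s S) (restrict s' S))"

lemma op_splits_merge:
  assumes "op_splits V S P Q R Op" "S \<subseteq> V"
    and "s1 \<in> PiE (V - S) P" "s1' \<in> PiE (V - S) P" "s2 \<in> PiE S P" "s2' \<in> PiE S P"
  shows "Op (merge (V - S) S (s1, s2)) (merge (V - S) S (s1', s2')) = Q s1 s1' * R s2 s2'"
proof -
  have "merge (V - S) S (s1, s2) \<in> PiE V P" "merge (V - S) S (s1', s2') \<in> PiE V P"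
    by (intro merge_in_PiE_Diff[OF assms(2)] assms(3-6))+
  with assms show ?thesis by (simp add: op_splits_def)
qed

lemma op_splits_cong:
  assumes "op_splits V S P Q R Op"
    and "\<And>s s'. s \<in> PiE (V - S) P \<Longrightarrow> s' \<in> PiE (V - S) P \<Longrightarrow> Q s s' = Q' s s'"
    and "\<And>s s'. s \<in> PiE S P \<Longrightarrow> s' \<in> PiE S P \<Longrightarrow> R s s' = R' s s'"
    and "S \<subseteq> V"
  shows "op_splits V S P Q' R' Op"
  using assms unfolding op_splits_def by (simp add: PiE_iff subset_iff)

lemma op_splits_op_id:
  assumes "S \<subseteq> V"
  shows "op_splits V S P (op_id (V - S) P) (op_id S P) (op_id V P)"
proof -
  have "s = s' \<longleftrightarrow> restrict s ((V - S) \<union> S) = restrict s' ((V - S) \<union> S)"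
    if "s \<in> PiE V P" "s' \<in> PiE V P" for s s'
    using that assms by (metis Diff_partition PiE_restrict sup_commute)
  then show ?thesis
    by (simp add: op_splits_def op_id_def restrict_Un_eq_iff del: Un_Diff_cancel2)
qed

lemma op_splits_op_on:
  "op_splits V S P (op_id (V - S) P) R (op_on V S R)"
  by (simp add: op_splits_def op_on_def op_id_def)

lemma op_splits_op_on_disjoint:
  assumes "X \<subseteq> V" "S \<subseteq> V" "X \<inter> S = {}"
  shows "op_splits V S P (op_on (V - S) X Q) (op_id S P) (op_on V X Q)"
proof -
  have "(V - S) \<inter> X = X" "(V - S) \<inter> (V - S - X) = V - S - X" "V - X = (V - S - X) \<union> S"
    using assms by auto
  then show ?thesis
    unfolding op_splits_def op_on_def op_id_def restrict_restrict by (simp add: restrict_Un_eq_iff)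
qed

lemma op_splits_op_mult:
  assumes "S \<subseteq> V" "op_splits V S P Q1 R1 Op1" "op_splits V S P Q2 R2 Op2"
  shows "op_splits V S P (op_mult (V - S) P Q1 Q2) (op_mult S P R1 R2) (op_mult V P Op1 Op2)"
  unfolding op_splits_def op_mult_def
proof (intro ballI)
  fix s s' assume s: "s \<in> PiE V P" "s' \<in> PiE V P"
  have V: "V = (V - S) \<union> S" using assms(1) by auto
  have "merge (V - S) S (t1, t2) \<in> PiE V P" if "t1 \<in> PiE (V - S) P" "t2 \<in> PiE S P" for t1 t2
    using merge_in_PiE_Diff[OF assms(1) that] .
  with s assms(2,3) show "(\<Sum>t\<in>PiE V P. Op1 s t * Op2 t s') =
    (\<Sum>t\<in>PiE (V - S) P. Q1 (restrict s (V - S)) t * Q2 t (restrict s' (V - S))) *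
    (\<Sum>t\<in>PiE S P. R1 (restrict s S) t * R2 t (restrict s' S))"
    by (subst V, intro sum_PiE_Un_mult) (auto simp: op_splits_def)
qed

lemma op_mult_op_id_right:
  assumes "finite (PiE V P)" "s \<in> PiE V P" "s' \<in> PiE V P"
  shows "op_mult V P Q (op_id V P) s s' = Q s s'"
proof -
  have "op_mult V P Q (op_id V P) s s' = (\<Sum>t\<in>PiE V P. if t = s' then Q s t else 0)"
    unfolding op_mult_def op_id_def by (intro sum.cong) auto
  then show ?thesis using assms by simp
qed

lemma op_mult_op_id_left:
  assumes "finite (PiE V P)" "s \<in> PiE V P" "s' \<in> PiE V P"
  shows "op_mult V P (op_id V P) Q s s' = Q s s'"
proof -
  have "op_mult V P (op_id V P) Q s s' = (\<Sum>t\<in>PiE V P. if s = t then Q t s' else 0)"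
    unfolding op_mult_def op_id_def by (intro sum.cong) auto
  then show ?thesis using assms by simp
qed

lemma op_splits_op_mult_op_on:
  assumes "finite V" "\<forall>v\<in>V. finite (P v)" "X \<subseteq> V" "S \<subseteq> V" "X \<inter> S = {}"
  shows "op_splits V S P (op_on (V - S) X OX) OS (op_mult V P (op_on V X OX) (op_on V S OS))"
    and "op_splits V S P (op_on (V - S) X OX) OS (op_mult V P (op_on V S OS) (op_on V X OX))"
proof -
  have fin: "finite (PiE (V - S) P)" "finite (PiE S P)"
    using assms(1,2,4) by (auto intro!: finite_PiE intro: finite_subset)
  note X = op_splits_op_on_disjoint[OF assms(3-5), of P OX]
  note S = op_splits_op_on[of V S P OS]
  show "op_splits V S P (op_on (V - S) X OX) OS (op_mult V P (op_on V X OX) (op_on V S OS))"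
    using op_splits_op_mult[OF assms(4) X S]
    by (rule op_splits_cong) (simp_all add: fin op_mult_op_id_left op_mult_op_id_right assms(4))
  show "op_splits V S P (op_on (V - S) X OX) OS (op_mult V P (op_on V S OS) (op_on V X OX))"
    using op_splits_op_mult[OF assms(4) S X]
    by (rule op_splits_cong) (simp_all add: fin op_mult_op_id_left op_mult_op_id_right assms(4))
qed

section \<open>Factorisation of the network across a cut\<close>

definition double_layer_amp :: "'v set set \<Rightarrow> ('v \<Rightarrow> 'p \<Rightarrow> ('v set \<Rightarrow> 'd) \<Rightarrow> complex)
    \<Rightarrow> 'v \<Rightarrow> 'p \<Rightarrow> 'p \<Rightarrow> ('v set \<times> 'v \<Rightarrow> 'd \<times> 'd) \<Rightarrow> complex" where
  "double_layer_amp E T v a b \<beta> = cnj (T v a (restrict (\<lambda>e. fst (\<beta> (e, v))) (inc E v))) *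
      T v b (restrict (\<lambda>e. snd (\<beta> (e, v))) (inc E v))"

definition bond_weight :: "'v set set \<Rightarrow> ('v set \<Rightarrow> ('v \<Rightarrow> 'd \<times> 'd) \<Rightarrow> complex)
    \<Rightarrow> ('v set \<times> 'v \<Rightarrow> 'd \<times> 'd) \<Rightarrow> complex" where
  "bond_weight E M \<beta> = (\<Prod>e\<in>E. M e (\<lambda>v. \<beta> (e, v)))"

definition region_net :: "'v set set \<Rightarrow> ('v set \<Rightarrow> 'd set) \<Rightarrow> ('v \<Rightarrow> 'p set)
    \<Rightarrow> ('v \<Rightarrow> 'p \<Rightarrow> ('v set \<Rightarrow> 'd) \<Rightarrow> complex) \<Rightarrow> 'v set \<Rightarrow> ('v set \<times> 'v) set
    \<Rightarrow> (('v \<Rightarrow> 'p) \<Rightarrow> ('v \<Rightarrow> 'p) \<Rightarrow> complex) \<Rightarrow> (('v set \<times> 'v \<Rightarrow> 'd \<times> 'd) \<Rightarrow> complex)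
    \<Rightarrow> complex" where
  "region_net E D P T U H Op W = (\<Sum>s\<in>PiE U P. \<Sum>s'\<in>PiE U P. Op s s' *
     (\<Sum>\<beta>\<in>PiE H (\<lambda>h. D (fst h) \<times> D (fst h)).
        W \<beta> * (\<Prod>v\<in>U. double_layer_amp E T v (s v) (s' v) \<beta>)))"

lemma net_eq_region_net:
  "net V E D P T Op M = region_net E D P T V (half_edges E) Op (bond_weight E M)"
  by (simp add: net_def region_net_def bond_weight_def double_layer_amp_def)

lemma double_layer_amp_cong:
  assumes "\<And>e. e \<in> inc E v \<Longrightarrow> \<beta> (e, v) = \<beta>' (e, v)"
  shows "double_layer_amp E T v a b \<beta> = double_layer_amp E T v a b \<beta>'"
proof -
  have "restrict (\<lambda>e. fst (\<beta> (e, v))) (inc E v) = restrict (\<lambda>e. fst (\<beta>' (e, v))) (inc E v)"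
    and "restrict (\<lambda>e. snd (\<beta> (e, v))) (inc E v) = restrict (\<lambda>e. snd (\<beta>' (e, v))) (inc E v)"
    using assms by (auto intro: restrict_ext)
  then show ?thesis by (simp add: double_layer_amp_def)
qed

lemma region_net_split:
  fixes D :: "'v set \<Rightarrow> 'd set" and W :: "('v set \<times> 'v \<Rightarrow> 'd \<times> 'd) \<Rightarrow> complex"
  defines "Dd \<equiv> \<lambda>h::'v set \<times> 'v. D (fst h) \<times> D (fst h)"
  assumes "finite V" "S \<subseteq> V" "H1 \<inter> H2 = {}" and Op: "op_splits V S P Q R Op"
    and H1: "\<And>v e. v \<in> V - S \<Longrightarrow> e \<in> inc E v \<Longrightarrow> (e, v) \<in> H1"
    and H2: "\<And>v e. v \<in> S \<Longrightarrow> e \<in> inc E v \<Longrightarrow> (e, v) \<in> H2"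
    and W: "\<And>\<beta>1 \<beta>2. \<beta>1 \<in> PiE H1 Dd \<Longrightarrow> \<beta>2 \<in> PiE H2 Dd \<Longrightarrow>
      W (merge H1 H2 (\<beta>1, \<beta>2)) = W1 \<beta>1 * W2 \<beta>2"
  shows "region_net E D P T V (H1 \<union> H2) Op W =
    region_net E D P T (V - S) H1 Q W1 * region_net E D P T S H2 R W2"
proof -
  let ?amp = "double_layer_amp E T"
  let ?m = "merge (V - S) S"
  have V: "V = (V - S) \<union> S" and fin: "finite (V - S)" "finite S"
    using assms(2,3) by (auto intro: finite_subset)
  have amp: "(\<Prod>v\<in>V. ?amp v (?m (s1, s2) v) (?m (s1', s2') v) (merge H1 H2 (\<beta>1, \<beta>2))) =
      (\<Prod>v\<in>V - S. ?amp v (s1 v) (s1' v) \<beta>1) * (\<Prod>v\<in>S. ?amp v (s2 v) (s2' v) \<beta>2)" for s1 s2 s1' s2' \<beta>1 \<beta>2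
  proof -
    have "?amp v (?m (s1, s2) v) (?m (s1', s2') v) (merge H1 H2 (\<beta>1, \<beta>2)) = ?amp v (s1 v) (s1' v) \<beta>1"
      if "v \<in> V - S" for v
      using that H1 assms(4) by (auto intro: double_layer_amp_cong)
    moreover have "?amp v (?m (s1, s2) v) (?m (s1', s2') v) (merge H1 H2 (\<beta>1, \<beta>2)) = ?amp v (s2 v) (s2' v) \<beta>2"
      if "v \<in> S" for v
      using that H2 assms(4) by (auto intro: double_layer_amp_cong)
    ultimately show ?thesis
      by (subst V, subst prod.union_disjoint) (use fin in auto)
  qed
  have inner: "(\<Sum>\<beta>\<in>PiE (H1 \<union> H2) Dd. W \<beta> * (\<Prod>v\<in>V. ?amp v (?m (s1, s2) v) (?m (s1', s2') v) \<beta>)) =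
      (\<Sum>\<beta>1\<in>PiE H1 Dd. W1 \<beta>1 * (\<Prod>v\<in>V - S. ?amp v (s1 v) (s1' v) \<beta>1)) *
      (\<Sum>\<beta>2\<in>PiE H2 Dd. W2 \<beta>2 * (\<Prod>v\<in>S. ?amp v (s2 v) (s2' v) \<beta>2))" for s1 s2 s1' s2'
    by (rule sum_PiE_Un_mult[OF assms(4)]) (simp add: W amp ac_simps)
  show ?thesis
    unfolding region_net_def Dd_def[symmetric]
    by (subst (1 2) V, intro sum_PiE_Un_mult)
      (auto simp: op_splits_merge[OF Op assms(3)] inner ac_simps)
qed

definition half_edges_at :: "'v set set \<Rightarrow> 'v set \<Rightarrow> ('v set \<times> 'v) set" where
  "half_edges_at E S = {h \<in> half_edges E. snd h \<in> S}"

definition msg_into :: "('v \<Rightarrow> 'v \<Rightarrow> 'd \<times> 'd \<Rightarrow> complex) \<Rightarrow> 'v set \<Rightarrow> 'v \<Rightarrow> 'd \<times> 'd \<Rightarrow> complex" where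
  "msg_into \<mu> e v k = (\<Prod>w\<in>e - {v}. \<mu> w v k)"

definition bond_weight_out :: "('v set \<Rightarrow> 'd set) \<Rightarrow> ('v \<Rightarrow> 'v \<Rightarrow> 'd \<times> 'd \<Rightarrow> complex)
    \<Rightarrow> 'v set set \<Rightarrow> 'v set \<Rightarrow> ('v set \<Rightarrow> ('v \<Rightarrow> 'd \<times> 'd) \<Rightarrow> complex)
    \<Rightarrow> ('v set \<times> 'v \<Rightarrow> 'd \<times> 'd) \<Rightarrow> complex" where
  "bond_weight_out D \<mu> E S M \<beta> = (\<Prod>e\<in>E. if e \<inter> S = {} then M e (\<lambda>v. \<beta> (e, v))
     else (\<Prod>v\<in>e - S. msg_into \<mu> e v (\<beta> (e, v))) / Imsg D \<mu> e)"

definition bond_weight_in :: "('v \<Rightarrow> 'v \<Rightarrow> 'd \<times> 'd \<Rightarrow> complex) \<Rightarrow> 'v set set \<Rightarrow> 'v set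
    \<Rightarrow> ('v set \<times> 'v \<Rightarrow> 'd \<times> 'd) \<Rightarrow> complex" where
  "bond_weight_in \<mu> E S \<beta> = (\<Prod>e\<in>E. \<Prod>v\<in>e \<inter> S. msg_into \<mu> e v (\<beta> (e, v)))"

lemma bp_bond_eq_prod_msg_into:
  assumes "finite e"
  shows "bp_bond D \<mu> e \<gamma> = (\<Prod>v\<in>e. msg_into \<mu> e v (\<gamma> v)) / Imsg D \<mu> e"
proof -
  have "opairs e = (SIGMA v:e. e - {v})" by (auto simp: opairs_def)
  then show ?thesis
    using assms by (simp add: bp_bond_def msg_into_def prod.Sigma case_prod_beta)
qed

lemma peps_data_finite:
  assumes "peps_data V E D P"
  shows "finite E" "\<And>e. e \<in> E \<Longrightarrow> finite e"
proof -
  have "finite V" "E \<subseteq> Pow V"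
    using assms by (auto simp: peps_data_def)
  then show "finite E" "\<And>e. e \<in> E \<Longrightarrow> finite e"
    by (auto intro: finite_subset)
qed

lemma bond_weight_merge:
  assumes fin: "\<And>e. e \<in> E \<Longrightarrow> finite e"
    and bp: "\<forall>e\<in>E. e \<inter> S \<noteq> {} \<longrightarrow> M e = bp_bond D \<mu> e"
    and \<beta>1: "\<beta>1 \<in> extensional (half_edges_at E (- S))"
    \<comment> \<open>\<open>M e\<close> also reads \<open>\<beta> (e, v)\<close> for \<open>v \<notin> e\<close>, where \<open>merge\<close> yields \<open>undefined\<close>\<close>
  shows "bond_weight E M (merge (half_edges_at E (- S)) (half_edges_at E S) (\<beta>1, \<beta>2)) =
    bond_weight_out D \<mu> E S M \<beta>1 * bond_weight_in \<mu> E S \<beta>2"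
  unfolding bond_weight_def bond_weight_out_def bond_weight_in_def prod.distrib[symmetric]
proof (rule prod.cong[OF refl])
  fix e assume e: "e \<in> E"
  let ?\<beta> = "merge (half_edges_at E (- S)) (half_edges_at E S) (\<beta>1, \<beta>2)"
  have disj: "half_edges_at E (- S) \<inter> half_edges_at E S = {}"
    by (auto simp: half_edges_at_def)
  have at_out: "?\<beta> (e, v) = \<beta>1 (e, v)" if "v \<in> e - S" for v
    using that e disj by (simp add: half_edges_at_def half_edges_def)
  have at_in: "?\<beta> (e, v) = \<beta>2 (e, v)" if "v \<in> e \<inter> S" for v
    using that e disj by (simp add: half_edges_at_def half_edges_def)
  show "M e (\<lambda>v. ?\<beta> (e, v)) = (if e \<inter> S = {} then M e (\<lambda>v. \<beta>1 (e, v))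
      else (\<Prod>v\<in>e - S. msg_into \<mu> e v (\<beta>1 (e, v))) / Imsg D \<mu> e) *
      (\<Prod>v\<in>e \<inter> S. msg_into \<mu> e v (\<beta>2 (e, v)))"
  proof (cases "e \<inter> S = {}")
    case True
    have "?\<beta> (e, v) = \<beta>1 (e, v)" for v
    proof (cases "v \<in> e")
      case False
      then have "(e, v) \<notin> half_edges_at E (- S) \<union> half_edges_at E S"
        by (auto simp: half_edges_at_def half_edges_def)
      then show ?thesis using \<beta>1 by (simp add: merge_def extensional_def)
    qed (use True at_out in auto)
    then show ?thesis using True by simp
  next
    case False
    have "M e (\<lambda>v. ?\<beta> (e, v)) = (\<Prod>v\<in>e. msg_into \<mu> e v (?\<beta> (e, v))) / Imsg D \<mu> e"
      using False bp e fin by (simp add: bp_bond_eq_prod_msg_into)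
    also have "(\<Prod>v\<in>e. msg_into \<mu> e v (?\<beta> (e, v))) =
        (\<Prod>v\<in>e - S. msg_into \<mu> e v (?\<beta> (e, v))) * (\<Prod>v\<in>e \<inter> S. msg_into \<mu> e v (?\<beta> (e, v)))"
      using prod.Int_Diff[OF fin[OF e], of _ S] by (simp add: mult.commute)
    also have "\<dots> = (\<Prod>v\<in>e - S. msg_into \<mu> e v (\<beta>1 (e, v))) *
        (\<Prod>v\<in>e \<inter> S. msg_into \<mu> e v (\<beta>2 (e, v)))"
      using at_out at_in by (intro arg_cong2[where f = "(*)"] prod.cong) simp_all
    finally show ?thesis using False by simp
  qed
qed

lemma net_splits:
  assumes pd: "peps_data V E D P" and "S \<subseteq> V" and Op: "op_splits V S P Q R Op"
    and bp: "\<forall>e\<in>E. e \<inter> S \<noteq> {} \<longrightarrow> M e = bp_bond D \<mu> e"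
  shows "net V E D P T Op M =
    region_net E D P T (V - S) (half_edges_at E (- S)) Q (bond_weight_out D \<mu> E S M) *
    region_net E D P T S (half_edges_at E S) R (bond_weight_in \<mu> E S)"
proof -
  have H: "half_edges E = half_edges_at E (- S) \<union> half_edges_at E S"
    by (auto simp: half_edges_at_def)
  show ?thesis
    unfolding net_eq_region_net H
  proof (rule region_net_split[OF _ \<open>S \<subseteq> V\<close> _ Op])
    show "finite V" using pd by (simp add: peps_data_def)
    fix \<beta>1 \<beta>2 assume "\<beta>1 \<in> PiE (half_edges_at E (- S)) (\<lambda>h. D (fst h) \<times> D (fst h))"
    then show "bond_weight E M (merge (half_edges_at E (- S)) (half_edges_at E S) (\<beta>1, \<beta>2)) =
        bond_weight_out D \<mu> E S M \<beta>1 * bond_weight_in \<mu> E S \<beta>2"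
      using bond_weight_merge[OF peps_data_finite(2)[OF pd] bp] by (simp add: PiE_def)
  qed (auto simp: half_edges_at_def half_edges_def inc_def)
qed

lemma Ztil_splits:
  assumes "peps_data V E D P" "S \<subseteq> V" "op_splits V S P Q R Op" "supp F \<inter> S = {}"
  shows "Ztil V E D P T \<mu> Op F =
    region_net E D P T (V - S) (half_edges_at E (- S)) Q
      (bond_weight_out D \<mu> E S (\<lambda>e. if e \<in> F then perp_bond D \<mu> e else bp_bond D \<mu> e)) *
    region_net E D P T S (half_edges_at E S) R (bond_weight_in \<mu> E S)"
  unfolding Ztil_def by (rule net_splits[OF assms(1-3)]) (use assms(4) in \<open>auto simp: supp_def\<close>)

lemma Zloop_op_splits_eq:
  assumes pd: "peps_data V E D P" and S: "S \<subseteq> V"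
    and Op1: "op_splits V S P Q R1 Op1" and Op2: "op_splits V S P Q R2 Op2"
    and "supp F \<inter> S = {}"
    and "ZBP V E D P T \<mu> Op1 \<noteq> 0" "ZBP V E D P T \<mu> Op2 \<noteq> 0"
  shows "Zloop V E D P T \<mu> Op1 F = Zloop V E D P T \<mu> Op2 F"
proof -
  have none: "supp {} \<inter> S = {}" by (simp add: supp_def)
  note Ztil = Ztil_splits[OF pd S Op1 assms(5), of T \<mu>] Ztil_splits[OF pd S Op1 none, of T \<mu>]
    Ztil_splits[OF pd S Op2 assms(5), of T \<mu>] Ztil_splits[OF pd S Op2 none, of T \<mu>]
  from assms(6,7) show ?thesis
    unfolding Zloop_def ZBP_def Ztil by simp
qed

lemma ZBP_op_splits_exchange:
  assumes pd: "peps_data V E D P" and S: "S \<subseteq> V"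
    and "op_splits V S P Q1 R1 Op11" "op_splits V S P Q1 R2 Op12"
    and "op_splits V S P Q2 R1 Op21" "op_splits V S P Q2 R2 Op22"
  shows "ZBP V E D P T \<mu> Op11 * ZBP V E D P T \<mu> Op22 = ZBP V E D P T \<mu> Op12 * ZBP V E D P T \<mu> Op21"
proof -
  have none: "supp {} \<inter> S = {}" by (simp add: supp_def)
  show ?thesis
    unfolding ZBP_def Ztil_splits[OF pd S assms(3) none] Ztil_splits[OF pd S assms(4) none]
      Ztil_splits[OF pd S assms(5) none] Ztil_splits[OF pd S assms(6) none]
    by (simp add: ac_simps)
qed

lemma correlator_loop_weights:
  fixes V A B :: "'v set" and P :: "'v \<Rightarrow> 'p set"
    and OA OB :: "('v \<Rightarrow> 'p) \<Rightarrow> ('v \<Rightarrow> 'p) \<Rightarrow> complex"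
  defines "Op0 \<equiv> op_id V P"
    and "OpA \<equiv> op_on V A OA"
    and "OpB \<equiv> op_on V B OB"
    and "OpAB \<equiv> op_mult V P (op_on V A OA) (op_on V B OB)"
  assumes pd: "peps_data V E D P" and "A \<subseteq> V" "B \<subseteq> V" "A \<inter> B = {}"
    and ZBP_nz: "\<forall>Op\<in>{Op0, OpA, OpB, OpAB}. ZBP V E D P T \<mu> Op \<noteq> 0"
  shows "ZBP V E D P T \<mu> OpAB * ZBP V E D P T \<mu> Op0 = ZBP V E D P T \<mu> OpA * ZBP V E D P T \<mu> OpB"
    and "supp l \<inter> B = {} \<Longrightarrow>
      Zloop V E D P T \<mu> OpAB l = Zloop V E D P T \<mu> OpA l \<and> Zloop V E D P T \<mu> OpB l = Zloop V E D P T \<mu> Op0 l"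
    and "supp l \<inter> A = {} \<Longrightarrow>
      Zloop V E D P T \<mu> OpAB l = Zloop V E D P T \<mu> OpB l \<and> Zloop V E D P T \<mu> OpA l = Zloop V E D P T \<mu> Op0 l"
proof -
  have fin: "finite V" "\<forall>v\<in>V. finite (P v)" using pd by (auto simp: peps_data_def)
  have "B \<inter> A = {}" using assms(8) by blast
  note cut_B = op_splits_op_id[OF assms(7), of P] op_splits_op_on_disjoint[OF assms(6,7,8), of P OA]
    op_splits_op_on[of V B P OB] op_splits_op_mult_op_on(1)[OF fin assms(6,7,8)]
  note cut_A = op_splits_op_id[OF assms(6), of P] op_splits_op_on_disjoint[OF assms(7,6) \<open>B \<inter> A = {}\<close>, of P OB]
    op_splits_op_on[of V A P OA] op_splits_op_mult_op_on(2)[OF fin assms(7,6) \<open>B \<inter> A = {}\<close>]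
  have nz: "ZBP V E D P T \<mu> (op_id V P) \<noteq> 0" "ZBP V E D P T \<mu> (op_on V A OA) \<noteq> 0"
    "ZBP V E D P T \<mu> (op_on V B OB) \<noteq> 0"
    "ZBP V E D P T \<mu> (op_mult V P (op_on V A OA) (op_on V B OB)) \<noteq> 0"
    using ZBP_nz by (simp_all add: Op0_def OpA_def OpB_def OpAB_def)
  show "ZBP V E D P T \<mu> OpAB * ZBP V E D P T \<mu> Op0 = ZBP V E D P T \<mu> OpA * ZBP V E D P T \<mu> OpB"
    unfolding Op0_def OpA_def OpB_def OpAB_def
    by (rule ZBP_op_splits_exchange[OF pd assms(7) cut_B(4,2,3,1)])
  show "Zloop V E D P T \<mu> OpAB l = Zloop V E D P T \<mu> OpA l \<and> Zloop V E D P T \<mu> OpB l = Zloop V E D P T \<mu> Op0 l"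
    if "supp l \<inter> B = {}"
    unfolding Op0_def OpA_def OpB_def OpAB_def
    using Zloop_op_splits_eq[OF pd assms(7) cut_B(4,2) that nz(4,2)]
      Zloop_op_splits_eq[OF pd assms(7) cut_B(3,1) that nz(3,1)] ..
  show "Zloop V E D P T \<mu> OpAB l = Zloop V E D P T \<mu> OpB l \<and> Zloop V E D P T \<mu> OpA l = Zloop V E D P T \<mu> Op0 l"
    if "supp l \<inter> A = {}"
    unfolding Op0_def OpA_def OpB_def OpAB_def
    using Zloop_op_splits_eq[OF pd assms(6) cut_A(4,2) that nz(4,3)]
      Zloop_op_splits_eq[OF pd assms(6) cut_A(3,1) that nz(2,1)] ..
qed

section \<open>Cancellation in the cluster expansion\<close>

lemma rtrancl_map:
  assumes "(x, y) \<in> R\<^sup>*" and "\<And>a b. (a, b) \<in> R \<Longrightarrow> (f a, f b) \<in> R'\<^sup>*"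
  shows "(f x, f y) \<in> R'\<^sup>*"
  using assms(1) by (induction rule: rtrancl_induct) (auto intro: rtrancl_trans assms(2))

lemma cluster_connected_mset_set:
  assumes "cluster_connected W"
  shows "cluster_connected (mset_set (set_mset W))"
proof -
  let ?W' = "mset_set (set_mset W)"
  let ?edge = "\<lambda>W. {(a, b). {a, b} \<in> ig_edges W}"
  define f :: "'a set set \<times> nat \<Rightarrow> 'a set set \<times> nat" where "f = (\<lambda>x. (fst x, 0))"
  have nodes': "ig_nodes ?W' = {(l, 0) | l. l \<in># W}"
    by (auto simp: ig_nodes_def count_mset_set)
  have step: "(f a, f b) \<in> (?edge ?W')\<^sup>*" if "(a, b) \<in> ?edge W" for a b
  proof (cases "fst a = fst b")
    case False
    from that have ab: "a \<in> ig_nodes W" "b \<in> ig_nodes W" "\<not> compatible (fst a) (fst b)"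
      using False by (auto simp: ig_edges_def doubleton_eq_iff compatible_def Int_commute)
    then have "f a \<in> ig_nodes ?W'" "f b \<in> ig_nodes ?W'"
      by (auto simp: nodes' f_def ig_nodes_def)
    with ab(3) False have "{f a, f b} \<in> ig_edges ?W'"
      unfolding ig_edges_def by (intro CollectI exI[of _ "f a"] exI[of _ "f b"]) (simp add: f_def)
    then show ?thesis by auto
  qed (simp add: f_def)
  have "(f x, f y) \<in> (?edge ?W')\<^sup>*" if "x \<in> ig_nodes W" "y \<in> ig_nodes W" for x y
  proof (rule rtrancl_map[OF _ step])
    show "(x, y) \<in> (?edge W)\<^sup>*"
      using that assms by (simp add: cluster_connected_def graph_connected_def)
  qed
  moreover have "x \<in> ig_nodes ?W' \<Longrightarrow> x \<in> ig_nodes W \<and> f x = x" for x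
    by (auto simp: nodes' ig_nodes_def f_def)
  ultimately show ?thesis
    unfolding cluster_connected_def graph_connected_def by metis
qed

lemma finite_loops_AB: "finite E \<Longrightarrow> finite (loops_AB E A B)"
  by (rule finite_subset[of _ "Pow E"]) (auto simp: loops_AB_def)

lemma Zcluster_cong:
  assumes "\<And>l. l \<in># W \<Longrightarrow> Zloop V E D P T \<mu> Op1 l = Zloop V E D P T \<mu> Op2 l"
  shows "Zcluster V E D P T \<mu> Op1 W = Zcluster V E D P T \<mu> Op2 W"
  unfolding Zcluster_def using assms by (metis image_mset_cong)

lemma Zcluster_correlator_cancel:
  assumes off_B: "\<And>l. supp l \<inter> B = {} \<Longrightarrow>
      Zloop V E D P T \<mu> OpAB l = Zloop V E D P T \<mu> OpA l \<and> Zloop V E D P T \<mu> OpB l = Zloop V E D P T \<mu> Op0 l"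
    and off_A: "\<And>l. supp l \<inter> A = {} \<Longrightarrow>
      Zloop V E D P T \<mu> OpAB l = Zloop V E D P T \<mu> OpB l \<and> Zloop V E D P T \<mu> OpA l = Zloop V E D P T \<mu> Op0 l"
    and avoids: "supp (\<Union>(set_mset W)) \<inter> A = {} \<or> supp (\<Union>(set_mset W)) \<inter> B = {}"
  shows "Zcluster V E D P T \<mu> OpAB W + Zcluster V E D P T \<mu> Op0 W
    - Zcluster V E D P T \<mu> OpA W - Zcluster V E D P T \<mu> OpB W = 0"
proof -
  have loops: "supp l \<inter> X = {}" if "supp (\<Union>(set_mset W)) \<inter> X = {}" "l \<in># W" for l X
    using that by (auto simp: supp_def)
  consider "supp (\<Union>(set_mset W)) \<inter> B = {}" | "supp (\<Union>(set_mset W)) \<inter> A = {}"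
    using avoids by blast
  then show ?thesis
  proof cases
    case 1
    then have "Zcluster V E D P T \<mu> OpAB W = Zcluster V E D P T \<mu> OpA W"
      "Zcluster V E D P T \<mu> OpB W = Zcluster V E D P T \<mu> Op0 W"
      using off_B loops by (blast intro: Zcluster_cong)+
    then show ?thesis by simp
  next
    case 2
    then have "Zcluster V E D P T \<mu> OpAB W = Zcluster V E D P T \<mu> OpB W"
      "Zcluster V E D P T \<mu> OpA W = Zcluster V E D P T \<mu> Op0 W"
      using off_A loops by (blast intro: Zcluster_cong)+
    then show ?thesis by simp
  qed
qed

lemma connected_correlator_eq_exp:
  fixes z0 zA zB zAB b0 bA bB bAB s0 sA sB sAB :: complex
  assumes "z0 \<noteq> 0" "z0 = b0 * exp s0" "zA = bA * exp sA" "zB = bB * exp sB" "zAB = bAB * exp sAB"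
    and "bAB * b0 = bA * bB"
  shows "zAB / z0 - (zA / z0) * (zB / z0) = (zA / z0) * (zB / z0) * (exp (sAB + s0 - sA - sB) - 1)"
proof -
  have "exp (sAB + s0) = exp sA * exp sB * exp (sAB + s0 - sA - sB)"
    by (simp add: exp_diff exp_add field_simps)
  then have "zAB * z0 = (bA * bB) * (exp sA * exp sB * exp (sAB + s0 - sA - sB))"
    by (simp add: assms(2,5) assms(6)[symmetric] exp_add[symmetric] ac_simps)
  also have "\<dots> = zA * zB * exp (sAB + s0 - sA - sB)"
    by (simp add: assms(3,4) ac_simps)
  finally have "zAB * z0 = zA * zB * exp (sAB + s0 - sA - sB)" .
  with assms(1) show ?thesis
    by (simp add: field_simps power2_eq_square)
qed

lemma connected_correlator_cluster_expansion:
  fixes Op0 OpA OpB OpAB :: "('v \<Rightarrow> 'p) \<Rightarrow> ('v \<Rightarrow> 'p) \<Rightarrow> complex" and L :: "'v set set set"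
  assumes "finite L"
    and expansion: "\<forall>Op\<in>{Op0, OpA, OpB, OpAB}. cluster_expansion_holds V E D P T \<mu> L Op"
    and "Zfull V E D P T Op0 \<noteq> 0"
    and "ZBP V E D P T \<mu> OpAB * ZBP V E D P T \<mu> Op0 = ZBP V E D P T \<mu> OpA * ZBP V E D P T \<mu> OpB"
    and off_B: "\<And>l. supp l \<inter> B = {} \<Longrightarrow>
      Zloop V E D P T \<mu> OpAB l = Zloop V E D P T \<mu> OpA l \<and> Zloop V E D P T \<mu> OpB l = Zloop V E D P T \<mu> Op0 l"
    and off_A: "\<And>l. supp l \<inter> A = {} \<Longrightarrow>
      Zloop V E D P T \<mu> OpAB l = Zloop V E D P T \<mu> OpB l \<and> Zloop V E D P T \<mu> OpA l = Zloop V E D P T \<mu> Op0 l"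
  shows
    "Zfull V E D P T OpAB / Zfull V E D P T Op0
       - (Zfull V E D P T OpA / Zfull V E D P T Op0) * (Zfull V E D P T OpB / Zfull V E D P T Op0)
     = (Zfull V E D P T OpA / Zfull V E D P T Op0) * (Zfull V E D P T OpB / Zfull V E D P T Op0) *
       (exp (\<Sum>\<Gamma>\<in>{\<Gamma>. \<Gamma> \<subseteq> L \<and> finite \<Gamma> \<and> cluster_connected (mset_set \<Gamma>) \<and>
                     supp (\<Union>\<Gamma>) \<inter> A \<noteq> {} \<and> supp (\<Union>\<Gamma>) \<inter> B \<noteq> {}}.
               Kfun V E D P T \<mu> L OpAB \<Gamma> + Kfun V E D P T \<mu> L Op0 \<Gamma>
               - Kfun V E D P T \<mu> L OpA \<Gamma> - Kfun V E D P T \<mu> L OpB \<Gamma>) - 1)"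
    (is "_ = _ * _ * (exp (\<Sum>\<Gamma>\<in>?G. _) - 1)")
proof -
  define w where "w = (\<lambda>Op W. ursell W * Zcluster V E D P T \<mu> Op W)"
  define d where "d W = w OpAB W + w Op0 W - w OpA W - w OpB W" for W
  define fibre where "fibre \<Gamma> = {W \<in> conn_clusters L. set_mset W = \<Gamma>}" for \<Gamma>
  let ?S = "\<lambda>Op. infsum (w Op) (conn_clusters L)"
  have Z: "Zfull V E D P T Op = ZBP V E D P T \<mu> Op * exp (?S Op)"
    and summable: "w Op summable_on conn_clusters L" if "Op \<in> {Op0, OpA, OpB, OpAB}" for Op
  proof -
    have "cluster_expansion_holds V E D P T \<mu> L Op" using expansion that by blast
    then show "Zfull V E D P T Op = ZBP V E D P T \<mu> Op * exp (?S Op)" "w Op summable_on conn_clusters L"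
      by (auto simp: cluster_expansion_holds_def w_def intro: abs_summable_summable)
  qed
  have summable_w: "w Op summable_on X" if "Op \<in> {Op0, OpA, OpB, OpAB}" "X \<subseteq> conn_clusters L" for Op X
    using summable_on_subset_banach[OF summable that(2)] that(1) .
  have summable_d: "d summable_on X" and
    infsum_d: "infsum d X = infsum (w OpAB) X + infsum (w Op0) X - infsum (w OpA) X - infsum (w OpB) X"
    if "X \<subseteq> conn_clusters L" for X
    using summable_w[OF _ that] unfolding d_def
    by (simp_all add: infsum_add infsum_diff summable_on_add summable_on_diff)
  have d_vanishes: "d W = 0" if "supp (\<Union>(set_mset W)) \<inter> A = {} \<or> supp (\<Union>(set_mset W)) \<inter> B = {}" for W
  proof -
    have "d W = ursell W * (Zcluster V E D P T \<mu> OpAB W + Zcluster V E D P T \<mu> Op0 W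
        - Zcluster V E D P T \<mu> OpA W - Zcluster V E D P T \<mu> OpB W)"
      by (simp add: d_def w_def algebra_simps)
    then show ?thesis using Zcluster_correlator_cancel[OF off_B off_A that] by simp
  qed
  have "infsum d (conn_clusters L) = (\<Sum>\<Gamma>\<in>?G. infsum d (fibre \<Gamma>))"
    unfolding fibre_def
  proof (rule infsum_eq_sum_fibres)
    show "finite ?G" using \<open>finite L\<close> by (auto intro: finite_subset[of _ "Pow L"])
    show "d summable_on {W \<in> conn_clusters L. set_mset W = \<Gamma>}" for \<Gamma>
      by (rule summable_d) blast
    show "set_mset W \<in> ?G" if "W \<in> conn_clusters L" "d W \<noteq> 0" for W
      using that d_vanishes cluster_connected_mset_set by (auto simp: conn_clusters_def)
  qed
  also have "\<dots> = (\<Sum>\<Gamma>\<in>?G. Kfun V E D P T \<mu> L OpAB \<Gamma> + Kfun V E D P T \<mu> L Op0 \<Gamma>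
               - Kfun V E D P T \<mu> L OpA \<Gamma> - Kfun V E D P T \<mu> L OpB \<Gamma>)"
    by (intro sum.cong refl) (simp add: infsum_d fibre_def Kfun_def w_def)
  finally have "(\<Sum>\<Gamma>\<in>?G. Kfun V E D P T \<mu> L OpAB \<Gamma> + Kfun V E D P T \<mu> L Op0 \<Gamma>
               - Kfun V E D P T \<mu> L OpA \<Gamma> - Kfun V E D P T \<mu> L OpB \<Gamma>) = ?S OpAB + ?S Op0 - ?S OpA - ?S OpB"
    using infsum_d[of "conn_clusters L"] by simp
  then show ?thesis
    using connected_correlator_eq_exp[OF assms(3) Z Z Z Z assms(4)] by simp
qed

theorem mainTheorem9:
  fixes V :: "'v set" and E :: "'v set set" and D :: "'v set \<Rightarrow> 'd set"
    and P :: "'v \<Rightarrow> 'p set" and T :: "'v \<Rightarrow> 'p \<Rightarrow> ('v set \<Rightarrow> 'd) \<Rightarrow> complex"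
    and \<mu> :: "'v \<Rightarrow> 'v \<Rightarrow> 'd \<times> 'd \<Rightarrow> complex"
    and A B :: "'v set"
    and OA OB :: "('v \<Rightarrow> 'p) \<Rightarrow> ('v \<Rightarrow> 'p) \<Rightarrow> complex"
  defines "Op0 \<equiv> op_id V P"
    and "OpA \<equiv> op_on V A OA"
    and "OpB \<equiv> op_on V B OB"
    and "OpAB \<equiv> op_mult V P (op_on V A OA) (op_on V B OB)"
    and "L \<equiv> loops_AB E A B"
  assumes graph: "peps_data V E D P"
    and AB: "A \<subseteq> V" "B \<subseteq> V" "A \<inter> B = {}"
    and Zpos: "Zfull V E D P T Op0 \<in> \<real>" "Re (Zfull V E D P T Op0) > 0"
    and bp: "bp_fixed_point V E D P T \<mu>"
    and ZBP_nz: "\<forall>Op\<in>{Op0, OpA, OpB, OpAB}. ZBP V E D P T \<mu> Op \<noteq> 0"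
    and OA_nz: "Zfull V E D P T OpA / Zfull V E D P T Op0 \<noteq> 0"
    and OB_nz: "Zfull V E D P T OpB / Zfull V E D P T Op0 \<noteq> 0"
    and expansion: "\<forall>Op\<in>{Op0, OpA, OpB, OpAB}. cluster_expansion_holds V E D P T \<mu> L Op"
  shows
    "Zfull V E D P T OpAB / Zfull V E D P T Op0
       - (Zfull V E D P T OpA / Zfull V E D P T Op0) * (Zfull V E D P T OpB / Zfull V E D P T Op0)
     = (Zfull V E D P T OpA / Zfull V E D P T Op0) * (Zfull V E D P T OpB / Zfull V E D P T Op0) *
       (exp (\<Sum>\<Gamma>\<in>{\<Gamma>. \<Gamma> \<subseteq> L \<and> finite \<Gamma> \<and> cluster_connected (mset_set \<Gamma>) \<and>
                     supp (\<Union>\<Gamma>) \<inter> A \<noteq> {} \<and> supp (\<Union>\<Gamma>) \<inter> B \<noteq> {}}.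
               Kfun V E D P T \<mu> L OpAB \<Gamma> + Kfun V E D P T \<mu> L Op0 \<Gamma>
               - Kfun V E D P T \<mu> L OpA \<Gamma> - Kfun V E D P T \<mu> L OpB \<Gamma>) - 1)"
proof -
  have "finite L"
    unfolding L_def using peps_data_finite(1)[OF graph] by (rule finite_loops_AB)
  moreover have "Zfull V E D P T Op0 \<noteq> 0" using Zpos(2) by auto
  moreover note correlator_loop_weights[OF graph AB, of OA OB,
      folded Op0_def OpA_def OpB_def OpAB_def, OF ZBP_nz]
  ultimately show ?thesis
    by (intro connected_correlator_cluster_expansion expansion)
qed

end
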